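(* Let $p\ge 2$, $m,L\in\mathbb{N}$ with $L\ge 1$, and let $z_1^{[0,T_1-1]},\dots,z_p^{[0,T_p-1]}$ be finite signal sequences with $z_i(k)\in\mathbb{R}^m$ and $T_i\ge L$. Then: 1) If $\{z_i^{[0,T_i-1]}\}_{i=1}^p$ are CCPE of order $L$ (so in particular $T_1=\dots=T_p=:T_0$), then they are also MCPE of order $L$, and also HCPE of order $L$ (for a split index $\bar p$, i.e. viewing $z_1,\dots,z_{\bar p}$ as the cumulative part and $z_{\bar p+1},\dots,z_p$ as the mosaic part). 2) Suppose $\{z_i^{[0,T_i-1]}\}_{i=1}^p$ are MCPE of order $L$. i) If $T_0=T_1=\dots=T_p$ and, for every choice of nonzero weights $\alpha_1,\dots,\alpha_p$, $\operatorname{im}\big(H_L^{mos}(\{z_i^{[0,T_i-1]}\}_{i=1}^p)^\top\big)\cap\operatorname{leftker}\big(\mathbf{1}_p\otimes I_{T_0-L+1}\big)=\{0\}$, then $\{z_i^{[0,T_i-1]}\}_{i=1}^p$ are also CCPE of order $L$. ii) If $T_0=T_1=\dots=T_{\bar p}$ for some $1\le\bar p<p$ and, for every choice of nonzero weights, $\operatorname{im}\big(H_L^{mos}(\{z_i^{[0,T_i-1]}\}_{i=1}^{p})^\top\big)\cap\operatorname{leftker}\Big(\begin{bmatrix}\mathbf{1}_{\bar p}\otimes I_{T_0-L+1}&0\\0&I_{S}\end{bmatrix}\Big)=\{0\}$ with $S=\sum_{i=\bar p+1}^p(T_i-L+1)$, then $\{z_i^{[0,T_i-1]}\}_{i=1}^p$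 are also HCPE of order $L$ (with cumulative part $z_1,\dots,z_{\bar p}$). 3) Suppose $\{z_i^{[0,T_i-1]}\}_{i=1}^p$ are HCPE of order $L$ with cumulative part $z_1,\dots,z_{\bar p}$ (common length $T_0$) and mosaic part $z_{\bar p+1},\dots,z_p$. Then i) $\{z_i^{[0,T_i-1]}\}_{i=1}^p$ are also MCPE of order $L$; ii) if moreover $T_0=T_{\bar p+1}=\dots=T_p$ and, for every choice of nonzero weights, $\operatorname{im}\big(H_L^{hyb}(\{z_i^{[0,T_i-1]}\}_{i=1}^p)^\top\big)\cap\operatorname{leftker}\big(\mathbf{1}_{p-\bar p+1}\otimes I_{T_0-L+1}\big)=\{0\}$, then $\{z_i^{[0,T_i-1]}\}_{i=1}^p$ are also CCPE of order $L$.
   Context: For a sequence $z^{[0,T-1]}=(z(0),\dots,z(T-1))$ with $z(k)\in\mathbb{R}^m$ and $L\le T$, the block Hankel matrix of order $L$ is $H_L(z^{[0,T-1]})\in\mathbb{R}^{mL\times(T-L+1)}$ whose $(r,c)$ block entry ($r=0,\dots,L-1$, $c=0,\dots,T-L$) is $z(r+c)$. Given nonzero real weights $\alpha_1,\dots,\alpha_p$: - $H_L^{mos}(\{z_i^{[0,T_i-1]}\}_{i=1}^p)=[\alpha_1H_L(z_1^{[0,T_1-1]})\ \cdots\ \alpha_pH_L(z_p^{[0,T_p-1]})]$; the signals are mosaic collectively persistently exciting (MCPE) of order $L$ if this matrix has full row rank $mL$ for every choice of nonzero $\alpha_i$. - If all lengths equal $T_0$: $H_L^{cum}(\{z_i^{[0,T_0-1]}\}_{i=1}^p)=\sum_{i=1}^p\alpha_iH_L(z_i^{[0,T_0-1]})$;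 the signals are cumulative collectively persistently exciting (CCPE) of order $L$ if this matrix has full row rank $mL$ for every choice of nonzero $\alpha_i$. - If $z_1,\dots,z_{\bar p}$ have common length $T_0$ and $z_{\bar p+1},\dots,z_p$ have lengths $T_i$: $H_L^{hyb}(\{z_i\}_{i=1}^p)=[\,H_L^{cum}(\{z_i^{[0,T_0-1]}\}_{i=1}^{\bar p})\ \ H_L^{mos}(\{z_i^{[0,T_i-1]}\}_{i=\bar p+1}^p)\,]$; the signals are hybrid collectively persistently exciting (HCPE) of order $L$ if this matrix has full row rank $mL$ for every choice of nonzero $\alpha_i$. For a matrix $M$, $\operatorname{leftker}M$ is the space of row vectors $v$ with $vM=0$; it is identified with a subspace of column vectors (by transposition) when intersected with $\operatorname{im}(H^\top)$. $\mathbf{1}_q$ is the all-ones column vector of length $q$, $\otimes$ the Kronecker product. *)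

theory Defs
  imports "Jordan_Normal_Form.DL_Rank"
begin

text \<open>A signal z :: nat => real vec, with z k in carrier_vec m for k < T (only samples
  z 0, ..., z (T-1) are used). Signals are indexed by i in {1..p}.\<close>

definition hankel :: "nat \<Rightarrow> nat \<Rightarrow> nat \<Rightarrow> (nat \<Rightarrow> real vec) \<Rightarrow> real mat" where
  "hankel m L T z = mat (m * L) (T - L + 1) (\<lambda>(r, c). z (r div m + c) $ (r mod m))"

definition hcat :: "'a::zero mat \<Rightarrow> 'a mat \<Rightarrow> 'a mat" where
  "hcat A B = four_block_mat A B (0\<^sub>m 0 (dim_col A)) (0\<^sub>m 0 (dim_col B))"

fun hcat_list :: "nat \<Rightarrow> 'a::zero mat list \<Rightarrow> 'a mat" where
  "hcat_list nr [] = 0\<^sub>m nr 0"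
| "hcat_list nr (A # As) = hcat A (hcat_list nr As)"

definition H_mos :: "nat \<Rightarrow> nat \<Rightarrow> nat \<Rightarrow> nat \<Rightarrow> (nat \<Rightarrow> nat) \<Rightarrow> (nat \<Rightarrow> nat \<Rightarrow> real vec)
    \<Rightarrow> (nat \<Rightarrow> real) \<Rightarrow> real mat" where
  "H_mos m L a b T z \<alpha> =
     hcat_list (m * L) (map (\<lambda>i. \<alpha> i \<cdot>\<^sub>m hankel m L (T i) (z i)) [a..<b + 1])"

definition H_cum :: "nat \<Rightarrow> nat \<Rightarrow> nat \<Rightarrow> nat \<Rightarrow> nat \<Rightarrow> (nat \<Rightarrow> nat \<Rightarrow> real vec)
    \<Rightarrow> (nat \<Rightarrow> real) \<Rightarrow> real mat" where
  "H_cum m L a b T0 z \<alpha> =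
     mat (m * L) (T0 - L + 1) (\<lambda>(r, c). \<Sum>i\<in>{a..b}. \<alpha> i * hankel m L T0 (z i) $$ (r, c))"

definition H_hyb :: "nat \<Rightarrow> nat \<Rightarrow> nat \<Rightarrow> nat \<Rightarrow> (nat \<Rightarrow> nat) \<Rightarrow> (nat \<Rightarrow> nat \<Rightarrow> real vec)
    \<Rightarrow> (nat \<Rightarrow> real) \<Rightarrow> real mat" where
  "H_hyb m L p pb T z \<alpha> = hcat (H_cum m L 1 pb (T 1) z \<alpha>) (H_mos m L (pb + 1) p T z \<alpha>)"

definition full_row_rank :: "real mat \<Rightarrow> bool" where
  "full_row_rank A \<longleftrightarrow> vec_space.rank (dim_row A) A = dim_row A"

definition nonzero_weights :: "nat \<Rightarrow> (nat \<Rightarrow> real) \<Rightarrow> bool" where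
  "nonzero_weights p \<alpha> \<longleftrightarrow> (\<forall>i\<in>{1..p}. \<alpha> i \<noteq> 0)"

definition MCPE :: "nat \<Rightarrow> nat \<Rightarrow> nat \<Rightarrow> (nat \<Rightarrow> nat) \<Rightarrow> (nat \<Rightarrow> nat \<Rightarrow> real vec) \<Rightarrow> bool" where
  "MCPE m L p T z \<longleftrightarrow> (\<forall>\<alpha>. nonzero_weights p \<alpha> \<longrightarrow> full_row_rank (H_mos m L 1 p T z \<alpha>))"

text \<open>CCPE presupposes all lengths equal (common length T0 = T 1).\<close>
definition CCPE :: "nat \<Rightarrow> nat \<Rightarrow> nat \<Rightarrow> (nat \<Rightarrow> nat) \<Rightarrow> (nat \<Rightarrow> nat \<Rightarrow> real vec) \<Rightarrow> bool" where
  "CCPE m L p T z \<longleftrightarrow> (\<forall>i\<in>{1..p}. T i = T 1) \<and>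
     (\<forall>\<alpha>. nonzero_weights p \<alpha> \<longrightarrow> full_row_rank (H_cum m L 1 p (T 1) z \<alpha>))"

definition HCPE :: "nat \<Rightarrow> nat \<Rightarrow> nat \<Rightarrow> nat \<Rightarrow> (nat \<Rightarrow> nat) \<Rightarrow> (nat \<Rightarrow> nat \<Rightarrow> real vec) \<Rightarrow> bool" where
  "HCPE m L p pb T z \<longleftrightarrow> (\<forall>i\<in>{1..pb}. T i = T 1) \<and>
     (\<forall>\<alpha>. nonzero_weights p \<alpha> \<longrightarrow> full_row_rank (H_hyb m L p pb T z \<alpha>))"

definition ones_kron_id :: "nat \<Rightarrow> nat \<Rightarrow> real mat" where
  "ones_kron_id q n = mat (q * n) n (\<lambda>(r, c). if r mod n = c then 1 else 0)"

text \<open>Row space im(H^T) (as column vectors) and left kernel of K (transposed to columns).\<close>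
definition im_transpose :: "real mat \<Rightarrow> real vec set" where
  "im_transpose H = {w. \<exists>u \<in> carrier_vec (dim_row H). w = transpose_mat H *\<^sub>v u}"

definition leftker :: "real mat \<Rightarrow> real vec set" where
  "leftker K = {v \<in> carrier_vec (dim_row K). transpose_mat K *\<^sub>v v = 0\<^sub>v (dim_col K)}"

end

theory Submission
  imports Defs
begin

text \<open>Each of the three Hankel matrices is obtained from another one by right multiplication with
  a fixed 0/1 matrix: \<open>H\<^sub>c\<^sub>u\<^sub>m = H\<^sub>m\<^sub>o\<^sub>s (\<one>\<^sub>p \<otimes> I)\<close>, \<open>H\<^sub>h\<^sub>y\<^sub>b = H\<^sub>m\<^sub>o\<^sub>s diag(\<one>\<^sub>p\<^sub>b \<otimes> I, I\<^sub>S)\<close>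
  and \<open>H\<^sub>c\<^sub>u\<^sub>m = H\<^sub>h\<^sub>y\<^sub>b (\<one> \<otimes> I)\<close> (the last two once the relevant lengths agree).
  Full row rank always passes from a product \<open>A K\<close> to its left factor \<open>A\<close>. Conversely, since
  \<open>(A K)\<^sup>T u = K\<^sup>T (A\<^sup>T u)\<close> and \<open>A\<^sup>T\<close> is injective when \<open>A\<close> has full row rank, it passes from
  \<open>A\<close> to \<open>A K\<close> as soon as the row space of \<open>A\<close> meets the left kernel of \<open>K\<close> only in \<open>0\<close>.
  Injectivity of \<open>A\<^sup>T\<close> is equivalent to full row rank via the Gram matrix \<open>A A\<^sup>T\<close>.
  None of this needs the size hypotheses on \<open>p\<close>, \<open>L\<close>, \<open>T\<^sub>i\<close> and the samples.\<close>

lemma (in vec_space) full_rank_iff_span_cols: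
  assumes A: "A \<in> carrier_mat n nc"
  shows "rank A = n \<longleftrightarrow> span (set (cols A)) = carrier_vec n"
proof
  assume r: "rank A = n"
  obtain S where S: "maximal S (\<lambda>T. T \<subseteq> set (cols A) \<and> lin_indpt T)"
    using maximal_exists[of "\<lambda>T. T \<subseteq> set (cols A) \<and> lin_indpt T" "card (set (cols A))" "{}"]
    by (meson List.finite_set card_mono empty_iff empty_subsetI finite_lin_indpt2 rev_finite_subset)
  have card_S: "card S = n" using rank_card_indpt[OF A S] r by simp
  have sub: "S \<subseteq> set (cols A)" and li: "lin_indpt S" using S unfolding maximal_def by auto
  have cols: "set (cols A) \<subseteq> carrier_vec n" using A cols_dim by blast
  have "basis S"
    by (rule dim_li_is_basis[OF fin_dim _ _ li])
      (use sub cols finite_subset in \<open>auto simp: card_S dim_is_n\<close>)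
  then have "carrier_vec n \<subseteq> span (set (cols A))"
    using span_is_monotone[OF sub] unfolding basis_def by simp
  then show "span (set (cols A)) = carrier_vec n" using span_is_subset2[OF cols] by auto
next
  assume "span (set (cols A)) = carrier_vec n"
  then have "span_vs (set (cols A)) = V" by simp
  then show "rank A = n" unfolding rank_def using dim_is_n by simp
qed

lemma (in vec_space) full_rank_iff_surj:
  assumes A: "A \<in> carrier_mat n nc"
  shows "rank A = n \<longleftrightarrow> (\<forall>y\<in>carrier_vec n. \<exists>x\<in>carrier_vec nc. A *\<^sub>v x = y)"
proof -
  have "span (set (cols A)) = {y\<in>carrier_vec n. \<exists>x\<in>carrier_vec nc. A *\<^sub>v x = y}"
    using col_space_eq[OF A] A unfolding col_space_def by simp
  then show ?thesis using full_rank_iff_span_cols[OF A] by auto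
qed

lemma full_row_rank_iff_surj:
  "full_row_rank A \<longleftrightarrow>
    (\<forall>y\<in>carrier_vec (dim_row A). \<exists>x\<in>carrier_vec (dim_col A). A *\<^sub>v x = y)"
  unfolding full_row_rank_def by (rule vec_space.full_rank_iff_surj) simp

lemma gram_mat_vec_eq_zero_imp:
  fixes A :: "real mat"
  assumes A: "A \<in> carrier_mat n nc" and u: "u \<in> carrier_vec n"
    and "A * transpose_mat A *\<^sub>v u = 0\<^sub>v n"
  shows "transpose_mat A *\<^sub>v u = 0\<^sub>v nc"
proof -
  let ?w = "transpose_mat A *\<^sub>v u"
  have w: "?w \<in> carrier_vec nc" using A u by simp
  have "?w \<bullet> ?w = u \<bullet> (A *\<^sub>v ?w)"
    using transpose_vec_mult_scalar[OF A w u] .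
  also have "\<dots> = 0" using assms by (simp add: assoc_mult_mat_vec[of _ n nc _ n])
  finally show ?thesis using conjugate_square_eq_0_vec[OF w] by simp
qed

lemma full_row_rank_iff_transpose_inj:
  fixes A :: "real mat"
  shows "full_row_rank A \<longleftrightarrow>
    (\<forall>u\<in>carrier_vec (dim_row A). transpose_mat A *\<^sub>v u = 0\<^sub>v (dim_col A) \<longrightarrow> u = 0\<^sub>v (dim_row A))"
    (is "_ \<longleftrightarrow> ?inj")
proof
  assume surj: "full_row_rank A"
  show ?inj
  proof (intro ballI impI)
    fix u assume u: "u \<in> carrier_vec (dim_row A)"
      and Au: "transpose_mat A *\<^sub>v u = 0\<^sub>v (dim_col A)"
    obtain x where x: "x \<in> carrier_vec (dim_col A)" "A *\<^sub>v x = u"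
      using surj u unfolding full_row_rank_iff_surj by blast
    have "u \<bullet> u = 0"
      using transpose_vec_mult_scalar[of A "dim_row A" "dim_col A" x u] x u Au by simp
    then show "u = 0\<^sub>v (dim_row A)" using conjugate_square_eq_0_vec[OF u] by simp
  qed
next
  assume inj: ?inj
  let ?G = "A * transpose_mat A" and ?n = "dim_row A"
  have G: "?G \<in> carrier_mat ?n ?n" by (rule mult_carrier_mat[of _ _ "dim_col A"]) auto
  have "v = 0\<^sub>v ?n" if v: "v \<in> carrier_vec ?n" and "?G *\<^sub>v v = 0\<^sub>v ?n" for v
  proof -
    have "transpose_mat A *\<^sub>v v = 0\<^sub>v (dim_col A)"
      by (rule gram_mat_vec_eq_zero_imp[OF _ that]) simp
    then show ?thesis using inj v by blast
  qed
  then have "det ?G \<noteq> 0" unfolding det_0_iff_vec_prod_zero_field[OF G] by blast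
  then have "vec_space.rank ?n ?G = ?n" by (simp add: vec_space.det_rank_iff[OF G])
  then have surj_G: "\<forall>y\<in>carrier_vec ?n. \<exists>x\<in>carrier_vec ?n. ?G *\<^sub>v x = y"
    by (simp add: vec_space.full_rank_iff_surj[OF G])
  show "full_row_rank A" unfolding full_row_rank_iff_surj
  proof
    fix y :: "real vec" assume "y \<in> carrier_vec ?n"
    then obtain x where x: "x \<in> carrier_vec ?n" "?G *\<^sub>v x = y"
      using surj_G by blast
    have "A *\<^sub>v (transpose_mat A *\<^sub>v x) = y"
      using x by (simp add: assoc_mult_mat_vec[of _ ?n "dim_col A" _ ?n])
    then show "\<exists>x\<in>carrier_vec (dim_col A). A *\<^sub>v x = y"
      by (intro bexI[of _ "transpose_mat A *\<^sub>v x"] carrier_vecI) simp_all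
  qed
qed

lemma transpose_mult_mat_vec:
  fixes A K :: "'a :: comm_semiring_0 mat"
  assumes "dim_col A = dim_row K" "u \<in> carrier_vec (dim_row A)"
  shows "transpose_mat (A * K) *\<^sub>v u = transpose_mat K *\<^sub>v (transpose_mat A *\<^sub>v u)"
proof -
  have K: "K \<in> carrier_mat (dim_col A) (dim_col K)" by (metis assms(1) carrier_mat_triv)
  show ?thesis
    using assms(2) transpose_mult[OF carrier_mat_triv[of A] K]
      assoc_mult_mat_vec[of "transpose_mat K" "dim_col K" "dim_col A" "transpose_mat A" "dim_row A" u]
    by (simp add: K)
qed

lemma mult_mat_vec_zero [simp]:
  "dim_col A = n \<Longrightarrow> A *\<^sub>v 0\<^sub>v n = (0\<^sub>v (dim_row A) :: 'a :: semiring_0 vec)"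
  by (intro eq_vecI) (auto simp: scalar_prod_def)

lemma full_row_rank_of_mult:
  fixes A K :: "real mat"
  assumes AK: "full_row_rank (A * K)" and dims: "dim_col A = dim_row K"
  shows "full_row_rank A"
  unfolding full_row_rank_iff_transpose_inj
proof (intro ballI impI)
  fix u assume u: "u \<in> carrier_vec (dim_row A)"
    and "transpose_mat A *\<^sub>v u = 0\<^sub>v (dim_col A)"
  then have "transpose_mat (A * K) *\<^sub>v u = 0\<^sub>v (dim_col (A * K))"
    using transpose_mult_mat_vec[OF dims u] dims by simp
  then show "u = 0\<^sub>v (dim_row A)" using AK u unfolding full_row_rank_iff_transpose_inj by simp
qed

lemma full_row_rank_mult:
  fixes A K :: "real mat"
  assumes A: "full_row_rank A"
    and trivial_intersection: "im_transpose A \<inter> leftker K = {0\<^sub>v (dim_col A)}"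
    and dims: "dim_col A = dim_row K"
  shows "full_row_rank (A * K)"
  unfolding full_row_rank_iff_transpose_inj
proof (intro ballI impI)
  fix u assume u: "u \<in> carrier_vec (dim_row (A * K))"
    and AKu: "transpose_mat (A * K) *\<^sub>v u = 0\<^sub>v (dim_col (A * K))"
  let ?w = "transpose_mat A *\<^sub>v u"
  have "transpose_mat K *\<^sub>v ?w = 0\<^sub>v (dim_col K)"
    using AKu transpose_mult_mat_vec[OF dims] u by simp
  then have "?w \<in> leftker K" unfolding leftker_def carrier_dim_vec using dims by simp
  moreover have "?w \<in> im_transpose A" unfolding im_transpose_def using u by auto
  ultimately have "?w = 0\<^sub>v (dim_col A)" using trivial_intersection by blast
  then show "u = 0\<^sub>v (dim_row (A * K))" using A u unfolding full_row_rank_iff_transpose_inj by simp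
qed

lemma ball_atLeastAtMost_subset:
  fixes a b c d :: "'a :: preorder"
  shows "\<forall>i\<in>{a..b}. P i \<Longrightarrow> a \<le> c \<Longrightarrow> d \<le> b \<Longrightarrow> \<forall>i\<in>{c..d}. P i"
  by (meson atLeastAtMost_iff order_trans)

lemma dim_hcat [simp]:
  "dim_row (hcat A B) = dim_row A" "dim_col (hcat A B) = dim_col A + dim_col B"
  unfolding hcat_def by auto

lemma index_hcat [simp]:
  "i < dim_row A \<Longrightarrow> j < dim_col A + dim_col B \<Longrightarrow>
    hcat A B $$ (i, j) = (if j < dim_col A then A $$ (i, j) else B $$ (i, j - dim_col A))"
  unfolding hcat_def by auto

lemma hcat_assoc:
  assumes "dim_row B = dim_row A" "dim_row C = dim_row A"
  shows "hcat A (hcat B C) = hcat (hcat A B) C"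
  using assms by (intro eq_matI) auto

lemma dim_hcat_list:
  assumes "\<forall>A\<in>set As. dim_row A = nr"
  shows "dim_row (hcat_list nr As) = nr" "dim_col (hcat_list nr As) = sum_list (map dim_col As)"
  using assms by (induction As) auto

lemma hcat_list_append:
  assumes "\<forall>A\<in>set (As @ Bs). dim_row A = nr"
  shows "hcat_list nr (As @ Bs) = hcat (hcat_list nr As) (hcat_list nr Bs)"
  using assms
proof (induction As)
  case Nil
  then show ?case by (intro eq_matI) (auto simp: dim_hcat_list)
next
  case (Cons A As)
  then show ?case by (simp add: hcat_assoc dim_hcat_list)
qed

lemma hcat_mult_four_block_mat:
  fixes X Y :: "'a :: semiring_0 mat"
  assumes "X \<in> carrier_mat nr a" "Y \<in> carrier_mat nr b" "P \<in> carrier_mat a c" "Q \<in> carrier_mat a d"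
    "R \<in> carrier_mat b c" "U \<in> carrier_mat b d"
  shows "hcat X Y * four_block_mat P Q R U = hcat (X * P + Y * R) (X * Q + Y * U)"
proof -
  have "hcat X Y * four_block_mat P Q R U = four_block_mat (X * P + Y * R) (X * Q + Y * U)
      (0\<^sub>m 0 a * P + 0\<^sub>m 0 b * R) (0\<^sub>m 0 a * Q + 0\<^sub>m 0 b * U)"
    unfolding hcat_def using assms by (subst mult_four_block_mat) auto
  also have "\<dots> = hcat (X * P + Y * R) (X * Q + Y * U)"
    unfolding hcat_def using assms by (intro cong_four_block_mat) auto
  finally show ?thesis .
qed

lemma dim_ones_kron_id [simp]:
  "dim_row (ones_kron_id q n) = q * n" "dim_col (ones_kron_id q n) = n"
  unfolding ones_kron_id_def by simp_all

lemma ones_kron_id_carrier [simp]: "ones_kron_id q n \<in> carrier_mat (q * n) n"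
  by (intro carrier_matI) simp_all

lemma ones_kron_id_Suc:
  "ones_kron_id (Suc q) n = four_block_mat (1\<^sub>m n) (0\<^sub>m n 0) (ones_kron_id q n) (0\<^sub>m (q * n) 0)"
proof (rule eq_matI)
  fix i j assume "i < dim_row (four_block_mat (1\<^sub>m n) (0\<^sub>m n 0) (ones_kron_id q n) (0\<^sub>m (q * n) 0))"
    and "j < dim_col (four_block_mat (1\<^sub>m n) (0\<^sub>m n 0) (ones_kron_id q n) (0\<^sub>m (q * n) 0))"
  then have "i < Suc q * n" "j < n" by auto
  moreover have "\<not> i < n \<Longrightarrow> (i - n) mod n = i mod n" by (simp add: mod_if)
  ultimately show "ones_kron_id (Suc q) n $$ (i, j)
      = four_block_mat (1\<^sub>m n) (0\<^sub>m n 0) (ones_kron_id q n) (0\<^sub>m (q * n) 0) $$ (i, j)"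
    unfolding ones_kron_id_def by auto
qed (auto simp: ones_kron_id_def)

lemma hcat_mult_ones_kron_id_Suc:
  assumes X: "X \<in> carrier_mat nr n" and Y: "Y \<in> carrier_mat nr (q * n)"
  shows "hcat X Y * ones_kron_id (Suc q) n = X + Y * ones_kron_id q n"
proof -
  have "hcat X Y * ones_kron_id (Suc q) n
      = hcat (X * 1\<^sub>m n + Y * ones_kron_id q n) (X * 0\<^sub>m n 0 + Y * 0\<^sub>m (q * n) 0)"
    unfolding ones_kron_id_Suc by (rule hcat_mult_four_block_mat[OF X Y]) auto
  also have "\<dots> = X + Y * ones_kron_id q n"
    using X Y by (intro eq_matI) auto
  finally show ?thesis .
qed

lemma hcat_list_mult_ones_kron_id:
  assumes "\<forall>i\<in>set is. f i \<in> carrier_mat nr n"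
  shows "hcat_list nr (map f is) * ones_kron_id (length is) n
    = mat nr n (\<lambda>(r, c). \<Sum>i\<leftarrow>is. f i $$ (r, c))"
  using assms
proof (induction "is")
  case Nil
  show ?case by (rule eq_matI) (auto simp: ones_kron_id_def)
next
  case (Cons i "is")
  have "map (dim_col \<circ> f) is = map (\<lambda>_. n) is" using Cons.prems by (intro map_cong) auto
  then have "hcat_list nr (map f is) \<in> carrier_mat nr (length is * n)"
    using dim_hcat_list[of "map f is" nr] Cons.prems
    by (auto simp: sum_list_triv simp del: map_eq_conv intro!: carrier_matI)
  moreover have "f i \<in> carrier_mat nr n" using Cons.prems by auto
  ultimately show ?case using Cons by (auto intro!: eq_matI simp: hcat_mult_ones_kron_id_Suc)
qed

lemma dim_hankel [simp]:
  "dim_row (hankel m L T z) = m * L" "dim_col (hankel m L T z) = T - L + 1"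
  unfolding hankel_def by simp_all

lemma hankel_carrier [simp]: "hankel m L T z \<in> carrier_mat (m * L) (T - L + 1)"
  unfolding hankel_def by simp

lemma dim_H_cum [simp]:
  "dim_row (H_cum m L a b T0 z \<alpha>) = m * L" "dim_col (H_cum m L a b T0 z \<alpha>) = T0 - L + 1"
  unfolding H_cum_def by simp_all

lemma sum_list_upt_Suc_eq_sum: "(\<Sum>i\<leftarrow>[a..<Suc b]. f i) = (\<Sum>i\<in>{a..b}. f i)"
  by (simp add: sum_list_distinct_conv_sum_set atLeastLessThanSuc_atLeastAtMost del: upt_Suc)

lemma dim_H_mos [simp]:
  "dim_row (H_mos m L a b T z \<alpha>) = m * L"
  "dim_col (H_mos m L a b T z \<alpha>) = (\<Sum>i\<in>{a..b}. T i - L + 1)"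
  unfolding H_mos_def
  by (simp_all add: dim_hcat_list o_def sum_list_upt_Suc_eq_sum del: upt_Suc)

lemma dim_col_H_mos_equal_lengths:
  assumes "\<forall>i\<in>{a..b}. T i = T0"
  shows "dim_col (H_mos m L a b T z \<alpha>) = (b + 1 - a) * (T0 - L + 1)"
  using assms by simp

lemma H_mos_split:
  assumes "a \<le> k + 1" "k \<le> b"
  shows "H_mos m L a b T z \<alpha> = hcat (H_mos m L a k T z \<alpha>) (H_mos m L (k + 1) b T z \<alpha>)"
proof -
  have "[a..<b + 1] = [a..<k + 1] @ [k + 1..<b + 1]"
    using assms upt_add_eq_append[of a "k + 1" "b - k"] by simp
  then show ?thesis unfolding H_mos_def
    by (simp del: upt_Suc) (rule hcat_list_append, auto)
qed

lemma H_cum_split: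
  assumes "a \<le> k + 1" "k \<le> b"
  shows "H_cum m L a k T0 z \<alpha> + H_cum m L (k + 1) b T0 z \<alpha> = H_cum m L a b T0 z \<alpha>"
proof -
  have "{a..b} = {a..k} \<union> {k + 1..b}" "{a..k} \<inter> {k + 1..b} = {}" using assms by auto
  then show ?thesis unfolding H_cum_def by (intro eq_matI) (auto simp: sum.union_disjoint)
qed

lemma H_mos_mult_ones_kron_id:
  assumes "\<forall>i\<in>{a..b}. T i = T0"
  shows "H_mos m L a b T z \<alpha> * ones_kron_id (b + 1 - a) (T0 - L + 1) = H_cum m L a b T0 z \<alpha>"
proof -
  let ?f = "\<lambda>i. \<alpha> i \<cdot>\<^sub>m hankel m L T0 (z i)"
  have mos: "H_mos m L a b T z \<alpha> = hcat_list (m * L) (map ?f [a..<b + 1])"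
    unfolding H_mos_def using assms by (intro arg_cong[where f = "hcat_list _"] map_cong) auto
  have "\<forall>i\<in>set [a..<b + 1]. ?f i \<in> carrier_mat (m * L) (T0 - L + 1)"
    by (intro ballI smult_carrier_mat hankel_carrier)
  from hcat_list_mult_ones_kron_id[OF this]
  have "H_mos m L a b T z \<alpha> * ones_kron_id (b + 1 - a) (T0 - L + 1)
      = mat (m * L) (T0 - L + 1) (\<lambda>(r, c). \<Sum>i\<leftarrow>[a..<b + 1]. ?f i $$ (r, c))"
    unfolding mos length_upt .
  also have "\<dots> = H_cum m L a b T0 z \<alpha>"
    unfolding H_cum_def sum_list_upt_Suc_eq_sum[symmetric]
    by (intro eq_matI) (auto intro!: arg_cong[where f = sum_list] simp del: upt_Suc)
  finally show ?thesis .
qed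

definition hyb_selector :: "nat \<Rightarrow> nat \<Rightarrow> nat \<Rightarrow> real mat" where
  "hyb_selector pb n S = four_block_mat (ones_kron_id pb n) (0\<^sub>m (pb * n) S) (0\<^sub>m S n) (1\<^sub>m S)"

lemma dim_hyb_selector [simp]:
  "dim_row (hyb_selector pb n S) = pb * n + S" "dim_col (hyb_selector pb n S) = n + S"
  unfolding hyb_selector_def by simp_all

lemma H_mos_mult_hyb_selector:
  assumes "pb \<le> p" and equal_lengths: "\<forall>i\<in>{1..pb}. T i = T 1"
  shows "H_mos m L 1 p T z \<alpha> * hyb_selector pb (T 1 - L + 1) (\<Sum>i\<in>{pb + 1..p}. T i - L + 1)
    = H_hyb m L p pb T z \<alpha>"
proof -
  define n S where "n = T 1 - L + 1" and "S = (\<Sum>i\<in>{pb + 1..p}. T i - L + 1)"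
  define X Y where "X = H_mos m L 1 pb T z \<alpha>" and "Y = H_mos m L (pb + 1) p T z \<alpha>"
  have X: "X \<in> carrier_mat (m * L) (pb * n)"
    using dim_col_H_mos_equal_lengths[OF equal_lengths, of m L z \<alpha>] unfolding X_def n_def
    by (intro carrier_matI) simp_all
  have Y: "Y \<in> carrier_mat (m * L) S" unfolding Y_def S_def by (intro carrier_matI) simp_all
  have "H_mos m L 1 p T z \<alpha> = hcat X Y"
    unfolding X_def Y_def using \<open>pb \<le> p\<close> by (intro H_mos_split) auto
  then have "H_mos m L 1 p T z \<alpha> * hyb_selector pb n S
      = hcat (X * ones_kron_id pb n + Y * 0\<^sub>m S n) (X * 0\<^sub>m (pb * n) S + Y * 1\<^sub>m S)"
    unfolding hyb_selector_def by (simp only:) (rule hcat_mult_four_block_mat[OF X Y], auto)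
  also have "\<dots> = hcat (H_cum m L 1 pb (T 1) z \<alpha>) Y"
  proof -
    have "X * ones_kron_id pb n = H_cum m L 1 pb (T 1) z \<alpha>"
      unfolding X_def n_def using H_mos_mult_ones_kron_id[OF equal_lengths] by simp
    moreover have "H_cum m L 1 pb (T 1) z \<alpha> \<in> carrier_mat (m * L) n"
      unfolding n_def by (intro carrier_matI) simp_all
    ultimately show ?thesis using X Y by simp
  qed
  finally show ?thesis unfolding H_hyb_def Y_def n_def S_def .
qed

lemma H_hyb_mult_ones_kron_id:
  assumes "pb \<le> p" and equal_lengths: "\<forall>i\<in>{1..p}. T i = T 1"
  shows "H_hyb m L p pb T z \<alpha> * ones_kron_id (p - pb + 1) (T 1 - L + 1) = H_cum m L 1 p (T 1) z \<alpha>"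
proof -
  define n where "n = T 1 - L + 1"
  have mos_lengths: "\<forall>i\<in>{pb + 1..p}. T i = T 1"
    by (rule ball_atLeastAtMost_subset[OF equal_lengths]) simp_all
  have mos: "H_mos m L (pb + 1) p T z \<alpha> \<in> carrier_mat (m * L) ((p - pb) * n)"
    using dim_col_H_mos_equal_lengths[OF mos_lengths, of m L z \<alpha>] unfolding n_def
    by (intro carrier_matI) simp_all
  have "H_hyb m L p pb T z \<alpha> * ones_kron_id (Suc (p - pb)) n
      = H_cum m L 1 pb (T 1) z \<alpha> + H_mos m L (pb + 1) p T z \<alpha> * ones_kron_id (p - pb) n"
    unfolding H_hyb_def by (rule hcat_mult_ones_kron_id_Suc[OF _ mos]) (simp add: carrier_matI n_def)
  also have "\<dots> = H_cum m L 1 pb (T 1) z \<alpha> + H_cum m L (pb + 1) p (T 1) z \<alpha>"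
    using H_mos_mult_ones_kron_id[OF mos_lengths] by (simp add: n_def)
  also have "\<dots> = H_cum m L 1 p (T 1) z \<alpha>" using \<open>pb \<le> p\<close> by (intro H_cum_split) auto
  finally show ?thesis by (simp add: n_def)
qed

lemma dim_col_H_hyb_equal_lengths:
  assumes "\<forall>i\<in>{pb + 1..p}. T i = T 1"
  shows "dim_col (H_hyb m L p pb T z \<alpha>) = (p - pb + 1) * (T 1 - L + 1)"
  using dim_col_H_mos_equal_lengths[OF assms, of m L z \<alpha>] unfolding H_hyb_def by simp

lemma dim_col_H_mos_eq_dim_row_hyb_selector:
  assumes "pb \<le> p" and equal_lengths: "\<forall>i\<in>{1..pb}. T i = T 1"
  shows "dim_col (H_mos m L 1 p T z \<alpha>)
    = dim_row (hyb_selector pb (T 1 - L + 1) (\<Sum>i\<in>{pb + 1..p}. T i - L + 1))"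
proof -
  have "H_mos m L 1 p T z \<alpha> = hcat (H_mos m L 1 pb T z \<alpha>) (H_mos m L (pb + 1) p T z \<alpha>)"
    using \<open>pb \<le> p\<close> by (intro H_mos_split) auto
  then show ?thesis
    using dim_col_H_mos_equal_lengths[OF equal_lengths, of m L z \<alpha>] by simp
qed

lemma CCPE_imp_MCPE:
  assumes "CCPE m L p T z"
  shows "MCPE m L p T z"
  unfolding MCPE_def
proof (intro allI impI)
  fix \<alpha> assume "nonzero_weights p \<alpha>"
  then have "full_row_rank (H_cum m L 1 p (T 1) z \<alpha>)" using assms unfolding CCPE_def by blast
  moreover have equal_lengths: "\<forall>i\<in>{1..p}. T i = T 1" using assms unfolding CCPE_def by blast
  ultimately have "full_row_rank (H_mos m L 1 p T z \<alpha> * ones_kron_id p (T 1 - L + 1))"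
    using H_mos_mult_ones_kron_id[OF equal_lengths, of m L z \<alpha>] by simp
  then show "full_row_rank (H_mos m L 1 p T z \<alpha>)"
    by (rule full_row_rank_of_mult) (use dim_col_H_mos_equal_lengths[OF equal_lengths] in simp)
qed

lemma CCPE_imp_HCPE:
  assumes "CCPE m L p T z" "pb \<le> p"
  shows "HCPE m L p pb T z"
proof -
  have equal_lengths: "\<forall>i\<in>{1..p}. T i = T 1" using assms unfolding CCPE_def by blast
  have mos_lengths: "\<forall>i\<in>{pb + 1..p}. T i = T 1"
    by (rule ball_atLeastAtMost_subset[OF equal_lengths]) simp_all
  have "full_row_rank (H_hyb m L p pb T z \<alpha>)" if "nonzero_weights p \<alpha>" for \<alpha>
  proof (rule full_row_rank_of_mult)
    show "full_row_rank (H_hyb m L p pb T z \<alpha> * ones_kron_id (p - pb + 1) (T 1 - L + 1))"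
      unfolding H_hyb_mult_ones_kron_id[OF \<open>pb \<le> p\<close> equal_lengths]
      using assms(1) that unfolding CCPE_def by blast
  qed (simp add: dim_col_H_hyb_equal_lengths[OF mos_lengths])
  moreover have "\<forall>i\<in>{1..pb}. T i = T 1"
    by (rule ball_atLeastAtMost_subset[OF equal_lengths]) (simp_all add: \<open>pb \<le> p\<close>)
  ultimately show ?thesis unfolding HCPE_def by blast
qed

lemma MCPE_imp_CCPE:
  assumes "MCPE m L p T z" and equal_lengths: "\<forall>i\<in>{1..p}. T i = T 1"
    and "\<forall>\<alpha>. nonzero_weights p \<alpha> \<longrightarrow>
      im_transpose (H_mos m L 1 p T z \<alpha>) \<inter> leftker (ones_kron_id p (T 1 - L + 1))
        = {0\<^sub>v (dim_col (H_mos m L 1 p T z \<alpha>))}"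
  shows "CCPE m L p T z"
proof -
  have "full_row_rank (H_cum m L 1 p (T 1) z \<alpha>)" if "nonzero_weights p \<alpha>" for \<alpha>
  proof -
    have "full_row_rank (H_mos m L 1 p T z \<alpha> * ones_kron_id p (T 1 - L + 1))"
    proof (rule full_row_rank_mult)
      show "full_row_rank (H_mos m L 1 p T z \<alpha>)" using assms(1) that unfolding MCPE_def by blast
      show "im_transpose (H_mos m L 1 p T z \<alpha>) \<inter> leftker (ones_kron_id p (T 1 - L + 1))
          = {0\<^sub>v (dim_col (H_mos m L 1 p T z \<alpha>))}" using assms(3) that by blast
    qed (use dim_col_H_mos_equal_lengths[OF equal_lengths] in simp)
    then show ?thesis using H_mos_mult_ones_kron_id[OF equal_lengths, of m L z \<alpha>] by simp
  qed
  then show ?thesis unfolding CCPE_def using equal_lengths by blast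
qed

lemma MCPE_imp_HCPE:
  assumes "MCPE m L p T z" "pb \<le> p" and equal_lengths: "\<forall>i\<in>{1..pb}. T i = T 1"
    and "\<forall>\<alpha>. nonzero_weights p \<alpha> \<longrightarrow>
      im_transpose (H_mos m L 1 p T z \<alpha>) \<inter>
        leftker (hyb_selector pb (T 1 - L + 1) (\<Sum>i\<in>{pb + 1..p}. T i - L + 1))
        = {0\<^sub>v (dim_col (H_mos m L 1 p T z \<alpha>))}"
  shows "HCPE m L p pb T z"
proof -
  have "full_row_rank (H_hyb m L p pb T z \<alpha>)" if "nonzero_weights p \<alpha>" for \<alpha>
    unfolding H_mos_mult_hyb_selector[OF \<open>pb \<le> p\<close> equal_lengths, symmetric]
  proof (rule full_row_rank_mult)
    show "full_row_rank (H_mos m L 1 p T z \<alpha>)" using assms(1) that unfolding MCPE_def by blast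
  qed (use assms(4) that dim_col_H_mos_eq_dim_row_hyb_selector[OF \<open>pb \<le> p\<close> equal_lengths]
    in blast)+
  then show ?thesis unfolding HCPE_def using equal_lengths by blast
qed

lemma HCPE_imp_MCPE:
  assumes "HCPE m L p pb T z" "pb \<le> p"
  shows "MCPE m L p T z"
proof -
  have equal_lengths: "\<forall>i\<in>{1..pb}. T i = T 1" using assms unfolding HCPE_def by blast
  have "full_row_rank (H_mos m L 1 p T z \<alpha>)" if "nonzero_weights p \<alpha>" for \<alpha>
  proof (rule full_row_rank_of_mult)
    show "full_row_rank (H_mos m L 1 p T z \<alpha>
        * hyb_selector pb (T 1 - L + 1) (\<Sum>i\<in>{pb + 1..p}. T i - L + 1))"
      unfolding H_mos_mult_hyb_selector[OF \<open>pb \<le> p\<close> equal_lengths]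
      using assms that unfolding HCPE_def by blast
  qed (rule dim_col_H_mos_eq_dim_row_hyb_selector[OF \<open>pb \<le> p\<close> equal_lengths])
  then show ?thesis unfolding MCPE_def by blast
qed

lemma HCPE_imp_CCPE:
  assumes "HCPE m L p pb T z" "pb \<le> p" and mos_lengths: "\<forall>i\<in>{pb + 1..p}. T i = T 1"
    and "\<forall>\<alpha>. nonzero_weights p \<alpha> \<longrightarrow>
      im_transpose (H_hyb m L p pb T z \<alpha>) \<inter> leftker (ones_kron_id (p - pb + 1) (T 1 - L + 1))
        = {0\<^sub>v (dim_col (H_hyb m L p pb T z \<alpha>))}"
  shows "CCPE m L p T z"
proof -
  have equal_lengths: "\<forall>i\<in>{1..p}. T i = T 1"
  proof
    fix i assume "i \<in> {1..p}"
    then have "i \<in> {1..pb} \<or> i \<in> {pb + 1..p}" by auto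
    then show "T i = T 1" using assms(1) mos_lengths unfolding HCPE_def by blast
  qed
  have "full_row_rank (H_cum m L 1 p (T 1) z \<alpha>)" if "nonzero_weights p \<alpha>" for \<alpha>
    unfolding H_hyb_mult_ones_kron_id[OF \<open>pb \<le> p\<close> equal_lengths, symmetric]
  proof (rule full_row_rank_mult)
    show "full_row_rank (H_hyb m L p pb T z \<alpha>)" using assms(1) that unfolding HCPE_def by blast
    show "im_transpose (H_hyb m L p pb T z \<alpha>) \<inter> leftker (ones_kron_id (p - pb + 1) (T 1 - L + 1))
        = {0\<^sub>v (dim_col (H_hyb m L p pb T z \<alpha>))}" using assms(4) that by blast
  qed (simp add: dim_col_H_hyb_equal_lengths[OF mos_lengths])
  then show ?thesis unfolding CCPE_def using equal_lengths by blast
qed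

theorem theorem1:
  fixes p m L :: nat and T :: "nat \<Rightarrow> nat" and z :: "nat \<Rightarrow> nat \<Rightarrow> real vec"
  assumes "p \<ge> 2" and "L \<ge> 1"
    and "\<forall>i\<in>{1..p}. T i \<ge> L"
    and "\<forall>i\<in>{1..p}. \<forall>k<T i. z i k \<in> carrier_vec m"
  shows
    \<comment> \<open>1)\<close>
    "(CCPE m L p T z \<longrightarrow> MCPE m L p T z \<and> (\<forall>pb. 1 \<le> pb \<and> pb < p \<longrightarrow> HCPE m L p pb T z))
     \<and>
     \<comment> \<open>2 i)\<close>
     (MCPE m L p T z \<and> (\<forall>i\<in>{1..p}. T i = T 1) \<and>
       (\<forall>\<alpha>. nonzero_weights p \<alpha> \<longrightarrow>
          im_transpose (H_mos m L 1 p T z \<alpha>) \<inter> leftker (ones_kron_id p (T 1 - L + 1))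
            = {0\<^sub>v (dim_col (H_mos m L 1 p T z \<alpha>))})
      \<longrightarrow> CCPE m L p T z)
     \<and>
     \<comment> \<open>2 ii)\<close>
     (\<forall>pb. 1 \<le> pb \<and> pb < p \<and> MCPE m L p T z \<and> (\<forall>i\<in>{1..pb}. T i = T 1) \<and>
       (\<forall>\<alpha>. nonzero_weights p \<alpha> \<longrightarrow>
          (let S = (\<Sum>i\<in>{pb+1..p}. T i - L + 1); n0 = T 1 - L + 1 in
           im_transpose (H_mos m L 1 p T z \<alpha>) \<inter>
             leftker (four_block_mat (ones_kron_id pb n0) (0\<^sub>m (pb * n0) S) (0\<^sub>m S n0) (1\<^sub>m S))
            = {0\<^sub>v (dim_col (H_mos m L 1 p T z \<alpha>))}))
      \<longrightarrow> HCPE m L p pb T z)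
     \<and>
     \<comment> \<open>3)\<close>
     (\<forall>pb. 1 \<le> pb \<and> pb < p \<and> HCPE m L p pb T z \<longrightarrow>
        MCPE m L p T z \<and>
        ((\<forall>i\<in>{pb+1..p}. T i = T 1) \<and>
          (\<forall>\<alpha>. nonzero_weights p \<alpha> \<longrightarrow>
             im_transpose (H_hyb m L p pb T z \<alpha>) \<inter> leftker (ones_kron_id (p - pb + 1) (T 1 - L + 1))
               = {0\<^sub>v (dim_col (H_hyb m L p pb T z \<alpha>))})
         \<longrightarrow> CCPE m L p T z))"
proof -
  have hyb_selector_let: "(let S = \<Sum>i\<in>{pb + 1..p}. T i - L + 1; n0 = T 1 - L + 1 in
      im_transpose (H_mos m L 1 p T z \<alpha>) \<inter>
        leftker (four_block_mat (ones_kron_id pb n0) (0\<^sub>m (pb * n0) S) (0\<^sub>m S n0) (1\<^sub>m S)) = X)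
    \<longleftrightarrow> im_transpose (H_mos m L 1 p T z \<alpha>) \<inter>
        leftker (hyb_selector pb (T 1 - L + 1) (\<Sum>i\<in>{pb + 1..p}. T i - L + 1)) = X" for pb \<alpha> X
    unfolding hyb_selector_def Let_def ..
  show ?thesis
    unfolding hyb_selector_let
    by (intro conjI allI impI; (elim conjE)?)
      (blast intro: CCPE_imp_MCPE CCPE_imp_HCPE MCPE_imp_CCPE MCPE_imp_HCPE HCPE_imp_MCPE
        HCPE_imp_CCPE less_imp_le_nat)+
qed

end
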